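(* For every family $(\alpha_k)$ as below, $\mathrm{3SAT}^{\mathrm C}\in\mathrm{P}^*_{\mathrm{lsis}}$.
   Context: $\mathbb B=\{T,F\}$. Let $v_1,v_2,\dots$ be propositional variables. For $k\in\mathbb N$ let $d(k)=\binom{2k}{1}+\binom{2k}{2}+\binom{2k}{3}$, and let $L_k$ be the set of sets $L$ of literals from $\{v_1,\neg v_1,\dots,v_k,\neg v_k\}$ with $1\le |L|\le 3$. Let $(\alpha_k)_{k\in\mathbb N}$ be bijections $\alpha_k:[1,d(k)]\to L_k$ such that (i) for all $i$ and $j\in[1,d(i)]$, $\alpha_{i+1}(j)=\alpha_i(j)$; and (ii) the map $\alpha(i)=\alpha_k(i)$ for the least $k$ with $i\le d(k)$ is polynomial-time computable. For $n\in\mathbb N$ let $k$ be such that $d(k)\le n<d(k+1)$ and define $\mathrm{3SAT}^{\mathrm C}_n:\mathbb B^n\to\mathbb B$ by $\mathrm{3SAT}^{\mathrm C}_n(b_1,\dots,b_n)=T$ iff $\bigwedge_{i\in[1,d(k)],\,b_i=T}\bigvee\alpha_k(i)$ is satisfiable; $\mathrm{3SAT}^{\mathrm C}=(\mathrm{3SAT}^{\mathrm C}_n)_n$. A primitive instruction is one of: a plain basic instruction $a$, a positive test instruction $+a$, a negative test instruction $-a$, a forward jump instruction $\#l$ ($l\in\mathbb N$), or the termination instruction $!$. An instruction sequence is a finite nonempty sequence $X=u_1;\dots;u_k$ of primitive instructions; $|X|=k$. $\mathrm{SIS}_{br}$ is the set of instruction sequences all of whose basic instructions belong to $\{\mathrm{in}{:}i.\mathrm{get}: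 i\ge1\}\cup\{\mathrm{out}.\mathrm{set}{:}T\}\cup\{\mathrm{split}(\mathrm{par}{:}i),\mathrm{reply}(\mathrm{par}{:}i): i\ge1\}$, where $\mathrm{in}{:}i$, $\mathrm{out}$ name Boolean registers and $\mathrm{par}{:}i$ are Boolean parameters. Splitting execution of $X\in\mathrm{SIS}_{br}$ on input $b\in\mathbb B^n$ is a finite tree of branches; each branch has a counter (initially 1) and a partial assignment $\sigma$ of Boolean parameters (initially empty). A branch deadlocks if its counter exceeds $k$, if it reaches $\#0$, if it executes $\mathrm{in}{:}j.\mathrm{get}$ with $j>n$, if it executes $\mathrm{reply}(p)$ with $\sigma(p)$ undefined, or if it executes $\mathrm{split}(p)$ with $\sigma(p)$ defined. At position $i$: $!$ terminates the branch successfully; $\#l$ ($l>0$) moves the counter to $i+l$; for $u_i\in\{a,+a,-a\}$ the basic instruction $a$ yields reply $r$ ($\mathrm{in}{:}j.\mathrm{get}$ yields $b_j$; $\mathrm{out}.\mathrm{set}{:}T$ yields $T$; $\mathrm{reply}(p)$ yields $\sigma(p)$; $\mathrm{split}(p)$ with $\sigma(p)$ undefined replaces the branch by two branches, one with $r=T$ and assignment $\sigma\cup\{p\mapsto T\}$ and one with $r=F$ and assignment $\sigma\cup\{p\mapsto F\}$), and the counter becomes $i+1$ for $a$; for $+a$: $i+1$ if $r=T$, $i+2$ if $r=F$; for $-a$: $i+1$ if $r=F$, $i+2$ if $r=T$. $X$ splitting computes $f:\mathbb B^n\to\mathbb B$ if for every $b\in\mathbb B^n$, every branch terminates successfully, and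 $f(b)=T$ iff some branch executes $\mathrm{out}.\mathrm{set}{:}T$. $\mathrm{P}^*_{\mathrm{lsis}}$ is the class of Boolean function families $(f_n)_{n\in\mathbb N}$, $f_n:\mathbb B^n\to\mathbb B$, for which there is a polynomial $h$ such that for every $n$ some $X\in\mathrm{SIS}_{br}$ splitting computes $f_n$ with $|X|\le h(n)$. *)

theory Defs
  imports Main "HOL-Computational_Algebra.Polynomial"
begin

text \<open>A literal is a pair (v, s): (v, True) stands for the variable v_v, (v, False) for its negation.\<close>
type_synonym literal = "nat \<times> bool"

definition d :: "nat \<Rightarrow> nat" where
  "d k = (2*k choose 1) + (2*k choose 2) + (2*k choose 3)"

definition Lits :: "nat \<Rightarrow> literal set set" where
  "Lits k = {L. L \<subseteq> {1..k} \<times> UNIV \<and> 1 \<le> card L \<and> card L \<le> 3}"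

text \<open>The unique k with d k \<le> n < d (k+1).\<close>
definition kidx :: "nat \<Rightarrow> nat" where
  "kidx n = (GREATEST k. d k \<le> n)"

text \<open>Inputs b in B^n are lists of length n; b_i is b ! (i-1).\<close>
definition threeSATC :: "(nat \<Rightarrow> nat \<Rightarrow> literal set) \<Rightarrow> nat \<Rightarrow> bool list \<Rightarrow> bool" where
  "threeSATC \<alpha> n b =
     (\<exists>asg :: nat \<Rightarrow> bool. \<forall>i \<in> {1..d (kidx n)}.
        b ! (i - 1) \<longrightarrow> (\<exists>(v, s) \<in> \<alpha> (kidx n) i. asg v = s))"

datatype basic = InGet nat | OutSetT | Split nat | Reply nat

datatype instr = Plain basic | PosTest basic | NegTest basic | Jump nat | Term

fun basic_ok :: "basic \<Rightarrow> bool" where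
  "basic_ok (InGet i) = (1 \<le> i)"
| "basic_ok OutSetT = True"
| "basic_ok (Split i) = (1 \<le> i)"
| "basic_ok (Reply i) = (1 \<le> i)"

fun instr_ok :: "instr \<Rightarrow> bool" where
  "instr_ok (Plain a) = basic_ok a"
| "instr_ok (PosTest a) = basic_ok a"
| "instr_ok (NegTest a) = basic_ok a"
| "instr_ok (Jump l) = True"
| "instr_ok Term = True"

definition SIS_br :: "instr list set" where
  "SIS_br = {X. X \<noteq> [] \<and> (\<forall>u \<in> set X. instr_ok u)}"

type_synonym passign = "nat \<Rightarrow> bool option"

text \<open>Possible (reply, new parameter assignment) outcomes of executing a basic instruction;
  the empty set means deadlock, two elements mean the branch splits.\<close>
fun replies :: "bool list \<Rightarrow> basic \<Rightarrow> passign \<Rightarrow> (bool \<times> passign) set" where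
  "replies b (InGet j) \<sigma> = (if 1 \<le> j \<and> j \<le> length b then {(b ! (j - 1), \<sigma>)} else {})"
| "replies b OutSetT \<sigma> = {(True, \<sigma>)}"
| "replies b (Reply p) \<sigma> = (case \<sigma> p of None \<Rightarrow> {} | Some r \<Rightarrow> {(r, \<sigma>)})"
| "replies b (Split p) \<sigma> = (case \<sigma> p of
      None \<Rightarrow> {(True, \<sigma>(p \<mapsto> True)), (False, \<sigma>(p \<mapsto> False))}
    | Some _ \<Rightarrow> {})"

text \<open>One step of a branch: configuration (counter, parameter assignment).\<close>
fun step :: "instr list \<Rightarrow> bool list \<Rightarrow> nat \<times> passign \<Rightarrow> nat \<times> passign \<Rightarrow> bool" where
  "step X b (i, \<sigma>) (i', \<sigma>') =
     (1 \<le> i \<and> i \<le> length X \<and>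
      (case X ! (i - 1) of
         Jump l \<Rightarrow> 0 < l \<and> i' = i + l \<and> \<sigma>' = \<sigma>
       | Plain a \<Rightarrow> (\<exists>r. (r, \<sigma>') \<in> replies b a \<sigma> \<and> i' = i + 1)
       | PosTest a \<Rightarrow> (\<exists>r. (r, \<sigma>') \<in> replies b a \<sigma> \<and> i' = (if r then i + 1 else i + 2))
       | NegTest a \<Rightarrow> (\<exists>r. (r, \<sigma>') \<in> replies b a \<sigma> \<and> i' = (if r then i + 2 else i + 1))
       | Term \<Rightarrow> False))"

definition reach :: "instr list \<Rightarrow> bool list \<Rightarrow> nat \<times> passign \<Rightarrow> bool" where
  "reach X b c = (step X b)\<^sup>*\<^sup>* (1, Map.empty) c"

definition at_term :: "instr list \<Rightarrow> nat \<Rightarrow> bool" where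
  "at_term X i = (1 \<le> i \<and> i \<le> length X \<and> X ! (i - 1) = Term)"

definition at_out :: "instr list \<Rightarrow> nat \<Rightarrow> bool" where
  "at_out X i = (1 \<le> i \<and> i \<le> length X \<and>
     X ! (i - 1) \<in> {Plain OutSetT, PosTest OutSetT, NegTest OutSetT})"

text \<open>Since jumps are forward and every step increases the counter, every branch is finite;
  hence "every branch terminates successfully" means every reachable configuration either is at
  a termination instruction or can make a step (no deadlock). A branch executes out.set:T iff it
  reaches a position holding an instruction with basic instruction out.set:T (which never deadlocks).\<close>
definition splitting_computes :: "instr list \<Rightarrow> nat \<Rightarrow> (bool list \<Rightarrow> bool) \<Rightarrow> bool" where
  "splitting_computes X n f =
     (\<forall>b. length b = n \<longrightarrow>
        (\<forall>c. reach X b c \<longrightarrow> at_term X (fst c) \<or> (\<exists>c'. step X b c c')) \<and>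
        (f b \<longleftrightarrow> (\<exists>c. reach X b c \<and> at_out X (fst c))))"

definition P_lsis :: "(nat \<Rightarrow> bool list \<Rightarrow> bool) set" where
  "P_lsis = {F. \<exists>h :: nat poly. \<forall>n. \<exists>X \<in> SIS_br.
              splitting_computes X n (F n) \<and> length X \<le> poly h n}"

end

theory Submission
  imports Defs
begin

(* For input length n let K = kidx n and D = d K, so K <= D <= n.  The instruction sequence
   built for n first executes split(par:1), ..., split(par:K), so that each branch fixes one
   truth assignment of v_1..v_K in its parameters.  Then, for every clause index i <= D, a
   block of nine instructions reads b_i and, if the clause is selected, tests its (at most
   three) literals via reply(par:v): as soon as a literal is true it jumps to the next block,
   and if none is true the branch terminates.  After the last block come out.set:T and !.
   Hence some branch executes out.set:T iff some assignment satisfies all selected clauses,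
   and the length K + 9D + 2 is at most 10n + 2. *)

lemma step_Jump:
  assumes "1 \<le> p" "p \<le> length X" "X ! (p - 1) = Jump l"
  shows "step X b (p, \<sigma>) c' \<longleftrightarrow> 0 < l \<and> c' = (p + l, \<sigma>)"
  using assms by (cases c') auto

lemma step_Term:
  assumes "X ! (p - 1) = Term"
  shows "\<not> step X b (p, \<sigma>) c'"
  using assms by (cases c') simp

lemma step_Plain:
  assumes "1 \<le> p" "p \<le> length X" "X ! (p - 1) = Plain a"
  shows "step X b (p, \<sigma>) c' \<longleftrightarrow> (\<exists>r \<sigma>'. (r, \<sigma>') \<in> replies b a \<sigma> \<and> c' = (p + 1, \<sigma>'))"
  using assms by (cases c') auto

lemma step_PosTest:
  assumes "1 \<le> p" "p \<le> length X" "X ! (p - 1) = PosTest a" "replies b a \<sigma> = {(r, \<sigma>)}"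
  shows "step X b (p, \<sigma>) c' \<longleftrightarrow> c' = (if r then p + 1 else p + 2, \<sigma>)"
  using assms by (cases c') auto

lemma step_NegTest:
  assumes "1 \<le> p" "p \<le> length X" "X ! (p - 1) = NegTest a" "replies b a \<sigma> = {(r, \<sigma>)}"
  shows "step X b (p, \<sigma>) c' \<longleftrightarrow> c' = (if r then p + 2 else p + 1, \<sigma>)"
  using assms by (cases c') auto

(* The test of literal (v, s): it skips the next instruction iff the literal is false. *)
definition lit_test :: "literal \<Rightarrow> instr" where
  "lit_test l = (if snd l then PosTest else NegTest) (Reply (fst l))"

lemma step_lit_test:
  assumes "1 \<le> p" "p \<le> length X" "X ! (p - 1) = lit_test l" "\<sigma> (fst l) = Some x"
  shows "step X b (p, \<sigma>) c' \<longleftrightarrow> c' = (if x = snd l then p + 1 else p + 2, \<sigma>)"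
proof -
  have reply: "replies b (Reply (fst l)) \<sigma> = {(x, \<sigma>)}" using assms(4) by simp
  show ?thesis
  proof (cases "snd l")
    case True
    then show ?thesis using step_PosTest[OF assms(1,2) _ reply] assms(3) by (simp add: lit_test_def)
  next
    case False
    then show ?thesis using step_NegTest[OF assms(1,2) _ reply] assms(3) by (simp add: lit_test_def)
  qed
qed

lemma reach_step: "reach X b c \<Longrightarrow> step X b c c' \<Longrightarrow> reach X b c'"
  unfolding reach_def by (rule rtranclp.rtrancl_into_rtrancl)

lemma length_concat_uniform:
  assumes "\<forall>xs \<in> set xss. length xs = c"
  shows "length (concat xss) = c * length xss"
  using assms by (induction xss) auto

lemma nth_concat_uniform:
  assumes "\<forall>xs \<in> set xss. length xs = c" "q < length xss" "r < c"
  shows "concat xss ! (c * q + r) = xss ! q ! r"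
  using assms
proof (induction xss arbitrary: q)
  case Nil
  then show ?case by simp
next
  case (Cons xs xss)
  show ?case
  proof (cases q)
    case 0
    then show ?thesis using Cons.prems by (simp add: nth_append)
  next
    case (Suc q')
    then have "concat (xs # xss) ! (c * q + r) = concat xss ! (c * q' + r)"
      using Cons.prems by (simp add: nth_append)
    then show ?thesis using Cons Suc by simp
  qed
qed

(* A nonempty set of at most m elements is enumerated by an m-element index range;
   this lists every clause by exactly three literals. *)
lemma surj_from_bounded_range:
  assumes "finite L" "L \<noteq> {}" "card L \<le> m"
  shows "\<exists>f :: nat \<Rightarrow> 'a. f ` {..<m} = L"
proof -
  obtain h where h: "bij_betw h {0..<card L} L"
    using ex_bij_betw_nat_finite[OF assms(1)] by blast
  define f where "f j = h (min j (card L - 1))" for j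
  have "0 < card L" using assms(1,2) by (simp add: card_gt_0_iff)
  have "f ` {..<m} = L"
  proof
    show "f ` {..<m} \<subseteq> L"
      using h \<open>0 < card L\<close> by (auto simp: f_def bij_betw_def)
    show "L \<subseteq> f ` {..<m}"
    proof
      fix l assume "l \<in> L"
      then obtain j where "j < card L" "l = h j" using h by (force simp: bij_betw_def)
      then have "l = f j" "j < m" using assms(3) by (auto simp: f_def)
      then show "l \<in> f ` {..<m}" by blast
    qed
  qed
  then show ?thesis by blast
qed

definition lit_true :: "passign \<Rightarrow> literal \<Rightarrow> bool" where
  "lit_true \<sigma> l \<longleftrightarrow> \<sigma> (fst l) = Some (snd l)"

(* The program for clauses i = 1..D over the variables 1..K, clause i consisting of the
   literals lit i 0, lit i 1, lit i 2; n is the input length, which covers all clause indices. *)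
locale clause_program =
  fixes K D n :: nat and lit :: "nat \<Rightarrow> nat \<Rightarrow> literal"
  assumes clauses_le_input: "D \<le> n"
    and lit_var: "\<And>i j. i \<in> {1..D} \<Longrightarrow> j < 3 \<Longrightarrow> fst (lit i j) \<in> {1..K}"
begin

(* Block of clause i: input test, and three literal tests each followed by a jump to the next block. *)
definition block :: "nat \<Rightarrow> instr list" where
  "block i = [NegTest (InGet i), Jump 8, lit_test (lit i 0), Jump 6, lit_test (lit i 1), Jump 4,
              lit_test (lit i 2), Jump 2, Term]"

definition clause_blocks :: "instr list" where
  "clause_blocks = concat (map (\<lambda>q. block (Suc q)) [0..<D])"

definition prog :: "instr list" where
  "prog = map (\<lambda>v. Plain (Split (Suc v))) [0..<K] @ clause_blocks @ [Plain OutSetT, Term]"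

(* Counter of instruction r of block q (blocks numbered from 0); block D is out.set:T; !. *)
abbreviation pc :: "nat \<Rightarrow> nat \<Rightarrow> nat" where
  "pc q r \<equiv> K + 9 * q + r + 1"

lemma block_cases:
  assumes "r < 9"
  obtains (input) "r = 0" "block i ! r = NegTest (InGet i)"
    | (jump) "odd r" "block i ! r = Jump (9 - r)"
    | (test) j where "r = 2 * j + 2" "j < 3" "block i ! r = lit_test (lit i j)"
    | (fail) "r = 8" "block i ! r = Term"
proof -
  have "r = 0 \<or> r = 1 \<or> r = 2 \<or> r = 3 \<or> r = 4 \<or> r = 5 \<or> r = 6 \<or> r = 7 \<or> r = 8"
    using assms by auto
  then show ?thesis
    using that(1,2,4) that(3)[of 0] that(3)[of 1] that(3)[of 2]
    by (elim disjE) (simp_all add: block_def)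
qed

lemma block_test: "j < 3 \<Longrightarrow> block i ! (2 * j + 2) = lit_test (lit i j)"
  by (auto simp: block_def less_Suc_eq numeral_eq_Suc)

lemma length_block [simp]: "length (block i) = 9"
  by (simp add: block_def)

lemma length_clause_blocks: "length clause_blocks = 9 * D"
  using length_concat_uniform[of "map (\<lambda>q. block (Suc q)) [0..<D]" 9] by (simp add: clause_blocks_def)

lemma length_prog: "length prog = K + 9 * D + 2"
  by (simp add: prog_def length_clause_blocks)

lemma prog_split: "p \<in> {1..K} \<Longrightarrow> prog ! (p - 1) = Plain (Split p)"
  by (auto simp: prog_def nth_append)

lemma prog_after_splits: "prog ! (K + i) = (clause_blocks @ [Plain OutSetT, Term]) ! i"
  using nth_append_length_plus[of "map (\<lambda>v. Plain (Split (Suc v))) [0..<K]"] by (simp add: prog_def)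

lemma prog_block:
  assumes "q < D" "r < 9"
  shows "prog ! (pc q r - 1) = block (Suc q) ! r"
proof -
  have "clause_blocks ! (9 * q + r) = block (Suc q) ! r"
    using nth_concat_uniform[of "map (\<lambda>q. block (Suc q)) [0..<D]" 9 q r] assms
    by (simp add: clause_blocks_def)
  then show ?thesis
    using assms prog_after_splits[of "9 * q + r"] by (simp add: nth_append length_clause_blocks add.assoc)
qed

lemma prog_out: "prog ! (pc D 0 - 1) = Plain OutSetT"
  using prog_after_splits[of "9 * D"] by (simp add: nth_append length_clause_blocks)

lemma prog_term: "prog ! (pc D 1 - 1) = Term"
  using prog_after_splits[of "9 * D + 1"] by (simp add: nth_append length_clause_blocks)

definition clause_ok :: "bool list \<Rightarrow> passign \<Rightarrow> nat \<Rightarrow> bool" where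
  "clause_ok b \<sigma> i \<longleftrightarrow> (b ! (i - 1) \<longrightarrow> (\<exists>j<3. lit_true \<sigma> (lit i j)))"

(* Along every branch: while splitting, exactly the parameters below the counter are set;
   afterwards all K are set, every selected clause of an earlier block is satisfied, and at an
   odd position (a jump to the next block) the clause of the current block is as well. *)
definition branch_inv :: "bool list \<Rightarrow> nat \<times> passign \<Rightarrow> bool" where
  "branch_inv b c \<longleftrightarrow> (case c of (p, \<sigma>) \<Rightarrow>
     (p \<in> {1..K} \<and> dom \<sigma> = {1..<p}) \<or>
     (dom \<sigma> = {1..K} \<and> (\<exists>q r. p = pc q r \<and> (q < D \<and> r < 9 \<or> q = D \<and> r < 2) \<and>
        (\<forall>i \<in> {1..q}. clause_ok b \<sigma> i) \<and> (q < D \<and> odd r \<longrightarrow> clause_ok b \<sigma> (Suc q)))))"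

lemma branch_inv_checking:
  assumes "dom \<sigma> = {1..K}" "q < D \<and> r < 9 \<or> q = D \<and> r < 2" "\<forall>i \<in> {1..q}. clause_ok b \<sigma> i"
    "q < D \<and> odd r \<longrightarrow> clause_ok b \<sigma> (Suc q)"
  shows "branch_inv b (pc q r, \<sigma>)"
  using assms unfolding branch_inv_def by blast

lemma branch_inv_block_start:
  assumes "dom \<sigma> = {1..K}" "q \<le> D" "\<forall>i \<in> {1..q}. clause_ok b \<sigma> i"
  shows "branch_inv b (pc q 0, \<sigma>)"
  using assms branch_inv_checking[of \<sigma> q 0 b] by (auto simp: le_less)

lemma lit_defined:
  assumes "dom \<sigma> = {1..K}" "i \<in> {1..D}" "j < 3"
  obtains x where "\<sigma> (fst (lit i j)) = Some x"
  using lit_var[OF assms(2,3)] assms(1) by blast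

definition progresses :: "bool list \<Rightarrow> nat \<times> passign \<Rightarrow> bool" where
  "progresses b c \<longleftrightarrow> (at_term prog (fst c) \<or> (\<exists>c'. step prog b c c')) \<and>
     (\<forall>c'. step prog b c c' \<longrightarrow> branch_inv b c')"

lemma progresses_succ:
  assumes "\<And>c'. step prog b c c' \<longleftrightarrow> c' \<in> S" "c'' \<in> S" "\<And>c'. c' \<in> S \<Longrightarrow> branch_inv b c'"
  shows "progresses b c"
proof -
  have "step prog b c c''" using assms(1,2) by simp
  moreover have "\<forall>c'. step prog b c c' \<longrightarrow> branch_inv b c'" using assms(1,3) by simp
  ultimately show ?thesis unfolding progresses_def by blast
qed

lemma progresses_det:
  assumes "\<And>c'. step prog b c c' \<longleftrightarrow> c' = c''" "branch_inv b c''"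
  shows "progresses b c"
  using progresses_succ[of b c "{c''}"] assms by simp

lemma progresses_term:
  assumes "at_term prog p"
  shows "progresses b (p, \<sigma>)"
  using assms step_Term unfolding progresses_def at_term_def by fastforce

lemma progresses_splitting:
  assumes "p \<in> {1..K}" "dom \<sigma> = {1..<p}"
  shows "progresses b (p, \<sigma>)"
proof -
  have pos: "1 \<le> p" "p \<le> length prog" using assms(1) by (auto simp: length_prog)
  have "\<sigma> p = None" using assms(2) by auto
  then have "replies b (Split p) \<sigma> = {(v, \<sigma>(p \<mapsto> v)) | v. True}" by (auto; metis (full_types))
  then have steps: "step prog b (p, \<sigma>) c' \<longleftrightarrow> c' \<in> range (\<lambda>v. (p + 1, \<sigma>(p \<mapsto> v)))" for c'
    using step_Plain[OF pos prog_split[OF assms(1)]] by auto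
  have succ_inv: "branch_inv b (p + 1, \<sigma>(p \<mapsto> v))" for v
  proof (cases "p < K")
    case True
    then show ?thesis using assms by (auto simp: branch_inv_def)
  next
    case False
    then have "dom (\<sigma>(p \<mapsto> v)) = {1..K}" using assms by auto
    then show ?thesis using branch_inv_block_start[of "\<sigma>(p \<mapsto> v)" 0 b] False assms(1) by auto
  qed
  then show ?thesis using progresses_succ[OF steps] by blast
qed

lemma progresses_literal_test:
  assumes "dom \<sigma> = {1..K}" "q < D" "j < 3" "\<forall>i \<in> {1..q}. clause_ok b \<sigma> i"
  shows "progresses b (pc q (2 * j + 2), \<sigma>)"
proof -
  let ?r = "2 * j + 2"
  have pos: "1 \<le> pc q ?r" "pc q ?r \<le> length prog" using assms(2,3) by (simp_all add: length_prog)
  have instr: "prog ! (pc q ?r - 1) = lit_test (lit (Suc q) j)"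
    using prog_block[OF assms(2), of ?r] block_test[OF assms(3)] assms(3) by simp
  have in_block: "branch_inv b (pc q r', \<sigma>)" if "r' < 9" "odd r' \<longrightarrow> clause_ok b \<sigma> (Suc q)" for r'
    using branch_inv_checking[of \<sigma> q r' b] assms(1,2,4) that by blast
  obtain x where x: "\<sigma> (fst (lit (Suc q) j)) = Some x"
    using lit_defined[OF assms(1) _ assms(3), of "Suc q"] assms(2) by auto
  then have "step prog b (pc q ?r, \<sigma>) c' \<longleftrightarrow>
      c' = (if x = snd (lit (Suc q) j) then pc q (?r + 1) else pc q (?r + 2), \<sigma>)" for c'
    using step_lit_test[OF pos instr] by (simp add: add.assoc)
  moreover have "branch_inv b (if x = snd (lit (Suc q) j) then pc q (?r + 1) else pc q (?r + 2), \<sigma>)"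
  proof (cases "x = snd (lit (Suc q) j)")
    case True
    then have "clause_ok b \<sigma> (Suc q)"
      using x assms(3) unfolding clause_ok_def lit_true_def by auto
    then show ?thesis using True in_block[of "?r + 1"] assms(3) by simp
  next
    case False
    then show ?thesis using in_block[of "?r + 2"] assms(3) by simp
  qed
  ultimately show ?thesis by (rule progresses_det)
qed

(* Inside a block the successor is unique (the assignment is already complete). *)
lemma progresses_block:
  assumes "length b = n" "dom \<sigma> = {1..K}" "q < D" "r < 9" "\<forall>i \<in> {1..q}. clause_ok b \<sigma> i"
    "odd r \<longrightarrow> clause_ok b \<sigma> (Suc q)"
  shows "progresses b (pc q r, \<sigma>)"
proof -
  have pos: "1 \<le> pc q r" "pc q r \<le> length prog" using assms(3,4) by (simp_all add: length_prog)
  note instr = prog_block[OF assms(3,4)]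
  have in_block: "branch_inv b (pc q r', \<sigma>)" if "r' < 9" "odd r' \<longrightarrow> clause_ok b \<sigma> (Suc q)" for r'
    using branch_inv_checking[of \<sigma> q r' b] assms(2,3,5) that by blast
  from assms(4) show ?thesis
  proof (cases rule: block_cases[where i = "Suc q"])
    case input
    have "replies b (InGet (Suc q)) \<sigma> = {(b ! q, \<sigma>)}"
      using assms(1,3) clauses_le_input by simp
    then have "step prog b (pc q r, \<sigma>) c' \<longleftrightarrow> c' = (if b ! q then pc q 2 else pc q 1, \<sigma>)" for c'
      using step_NegTest[OF pos] instr input by (simp add: add.assoc)
    moreover have "branch_inv b (if b ! q then pc q 2 else pc q 1, \<sigma>)"
      using in_block[of 1] in_block[of 2] by (simp add: clause_ok_def)
    ultimately show ?thesis by (rule progresses_det)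
  next
    case jump
    have "\<forall>i \<in> {1..Suc q}. clause_ok b \<sigma> i"
      using assms(5,6) jump by (auto simp: le_Suc_eq)
    then have next_block: "branch_inv b (pc (Suc q) 0, \<sigma>)"
      using branch_inv_block_start[of \<sigma> "Suc q" b] assms(2,3) by simp
    have "step prog b (pc q r, \<sigma>) c' \<longleftrightarrow> c' = (pc (Suc q) 0, \<sigma>)" for c'
      using step_Jump[OF pos] instr jump assms(4) by auto
    then show ?thesis using next_block by (rule progresses_det)
  next
    case (test j)
    then show ?thesis using progresses_literal_test[OF assms(2,3) test(2) assms(5)] by simp
  next
    case fail
    then show ?thesis using progresses_term instr pos by (simp add: at_term_def)
  qed
qed

lemma progresses_final:
  assumes "dom \<sigma> = {1..K}" "r < 2" "\<forall>i \<in> {1..D}. clause_ok b \<sigma> i"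
  shows "progresses b (pc D r, \<sigma>)"
proof (cases r)
  case 0
  have pos: "1 \<le> pc D 0" "pc D 0 \<le> length prog" by (simp_all add: length_prog)
  have "step prog b (pc D 0, \<sigma>) c' \<longleftrightarrow> c' = (pc D 1, \<sigma>)" for c'
    using step_Plain[OF pos prog_out] by auto
  moreover have "branch_inv b (pc D 1, \<sigma>)"
    using branch_inv_checking[of \<sigma> D 1 b] assms by simp
  ultimately show ?thesis using 0 by (simp add: progresses_det)
next
  case (Suc r')
  then have "r = 1" using assms(2) by simp
  then show ?thesis using progresses_term prog_term by (simp add: at_term_def length_prog)
qed

lemma branch_inv_progresses:
  assumes "branch_inv b c" "length b = n"
  shows "progresses b c"
  using assms progresses_splitting progresses_block progresses_final
  unfolding branch_inv_def by (cases c) auto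

lemma reach_branch_inv:
  assumes "reach prog b c" "length b = n"
  shows "branch_inv b c"
proof -
  have "(step prog b)\<^sup>*\<^sup>* (1, Map.empty) c" using assms(1) by (simp add: reach_def)
  then show ?thesis
  proof (induction rule: rtranclp_induct)
    case base
    show ?case
    proof (cases "K = 0")
      case True
      then show ?thesis using branch_inv_block_start[of Map.empty 0 b] by simp
    next
      case False
      then show ?thesis by (simp add: branch_inv_def)
    qed
  next
    case (step c c')
    then show ?case using branch_inv_progresses[OF _ assms(2)] unfolding progresses_def by blast
  qed
qed

lemma out_reached_clauses_ok:
  assumes "branch_inv b (p, \<sigma>)" "at_out prog p"
  shows "\<forall>i \<in> {1..D}. clause_ok b \<sigma> i"
proof -
  let ?outs = "{Plain OutSetT, PosTest OutSetT, NegTest OutSetT}"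
  from assms(1) consider (splitting) "p \<in> {1..K}"
    | (block) q r where "p = pc q r" "q < D" "r < 9"
    | (final) r where "p = pc D r" "r < 2" "\<forall>i \<in> {1..D}. clause_ok b \<sigma> i"
    unfolding branch_inv_def by auto
  then show ?thesis
  proof cases
    case splitting
    then show ?thesis using assms(2) prog_split[OF splitting] by (auto simp: at_out_def)
  next
    case block
    have "prog ! (p - 1) = block (Suc q) ! r" using prog_block[OF block(2,3)] block(1) by simp
    moreover from block(3) have "block (Suc q) ! r \<notin> ?outs"
      by (cases rule: block_cases[where i = "Suc q"]) (simp_all add: lit_test_def)
    ultimately show ?thesis using assms(2) unfolding at_out_def by simp
  next
    case final
    then show ?thesis by simp
  qed
qed

definition clauses_satisfiable :: "bool list \<Rightarrow> bool" where
  "clauses_satisfiable b \<longleftrightarrow>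
     (\<exists>asg. \<forall>i \<in> {1..D}. b ! (i - 1) \<longrightarrow> (\<exists>j<3. asg (fst (lit i j)) = snd (lit i j)))"

lemma reach_splitting:
  assumes "p \<in> {1..Suc K}"
  shows "reach prog b (p, (\<lambda>v. Some (asg v)) |` {1..<p})"
  using assms
proof (induction p)
  case 0
  then show ?case by simp
next
  case (Suc p)
  show ?case
  proof (cases "p = 0")
    case True
    then show ?thesis by (simp add: reach_def)
  next
    case False
    then have p: "p \<in> {1..K}" using Suc.prems by simp
    let ?\<sigma> = "(\<lambda>v. Some (asg v)) |` {1..<p}"
    have pos: "1 \<le> p" "p \<le> length prog" using p by (auto simp: length_prog)
    have "(asg p, ?\<sigma>(p \<mapsto> asg p)) \<in> replies b (Split p) ?\<sigma>"
      by (cases "asg p") auto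
    then have "step prog b (p, ?\<sigma>) (Suc p, ?\<sigma>(p \<mapsto> asg p))"
      by (subst step_Plain[OF pos prog_split[OF p]]) auto
    moreover have "?\<sigma>(p \<mapsto> asg p) = (\<lambda>v. Some (asg v)) |` {1..<Suc p}"
      using p by (auto simp: restrict_map_def fun_eq_iff)
    moreover have "reach prog b (p, ?\<sigma>)" using Suc.IH p by simp
    ultimately show ?thesis using reach_step by metis
  qed
qed

lemma reach_jump:
  assumes "q < D" "r < 9" "odd r" "reach prog b (pc q r, \<sigma>)"
  shows "reach prog b (pc (Suc q) 0, \<sigma>)"
proof -
  have pos: "1 \<le> pc q r" "pc q r \<le> length prog" using assms(1,2) by (simp_all add: length_prog)
  from assms(2) have "block (Suc q) ! r = Jump (9 - r)"
    by (cases rule: block_cases[where i = "Suc q"]) (use assms(3) in auto)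
  then have "prog ! (pc q r - 1) = Jump (9 - r)" using prog_block[OF assms(1,2)] by simp
  then have "step prog b (pc q r, \<sigma>) (pc (Suc q) 0, \<sigma>)"
    by (subst step_Jump[OF pos]) (use assms(2) in auto)
  then show ?thesis using reach_step[OF assms(4)] by blast
qed

lemma reach_literal_tests:
  assumes "q < D" "dom \<sigma> = {1..K}" "j < 3" "lit_true \<sigma> (lit (Suc q) j)"
  shows "j0 \<le> j \<Longrightarrow> reach prog b (pc q (2 * j0 + 2), \<sigma>) \<Longrightarrow> reach prog b (pc (Suc q) 0, \<sigma>)"
proof (induction "j - j0" arbitrary: j0 rule: less_induct)
  case less
  have j0: "j0 < 3" using less.prems(1) assms(3) by simp
  obtain x where x: "\<sigma> (fst (lit (Suc q) j0)) = Some x"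
    using lit_defined[OF assms(2) _ j0, of "Suc q"] assms(1) by auto
  have pos: "1 \<le> pc q (2 * j0 + 2)" "pc q (2 * j0 + 2) \<le> length prog"
    using assms(1) j0 by (simp_all add: length_prog)
  have instr: "prog ! (pc q (2 * j0 + 2) - 1) = lit_test (lit (Suc q) j0)"
    using prog_block[OF assms(1), of "2 * j0 + 2"] block_test[OF j0] j0 by simp
  have "step prog b (pc q (2 * j0 + 2), \<sigma>)
      (if x = snd (lit (Suc q) j0) then pc q (2 * j0 + 3) else pc q (2 * Suc j0 + 2), \<sigma>)"
    by (subst step_lit_test[where \<sigma> = \<sigma>, OF pos instr x]) simp
  then have reached: "reach prog b
      (if x = snd (lit (Suc q) j0) then pc q (2 * j0 + 3) else pc q (2 * Suc j0 + 2), \<sigma>)"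
    using reach_step less.prems(2) by blast
  show ?case
  proof (cases "x = snd (lit (Suc q) j0)")
    case True
    then show ?thesis using reached reach_jump[OF assms(1), of "2 * j0 + 3"] j0 by simp
  next
    case False
    then have "j0 \<noteq> j" using x assms(4) by (auto simp: lit_true_def)
    then show ?thesis using less.hyps[of "Suc j0"] less.prems(1) reached False by simp
  qed
qed

lemma reach_through_block:
  assumes "length b = n" "q < D" "dom \<sigma> = {1..K}" "clause_ok b \<sigma> (Suc q)"
    "reach prog b (pc q 0, \<sigma>)"
  shows "reach prog b (pc (Suc q) 0, \<sigma>)"
proof -
  have pos: "1 \<le> pc q 0" "pc q 0 \<le> length prog" using assms(2) by (simp_all add: length_prog)
  have instr: "prog ! (pc q 0 - 1) = NegTest (InGet (Suc q))"
    using prog_block[OF assms(2), of 0] by (simp add: block_def)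
  have reply: "replies b (InGet (Suc q)) \<sigma> = {(b ! q, \<sigma>)}"
    using assms(1,2) clauses_le_input by simp
  have "step prog b (pc q 0, \<sigma>) (if b ! q then pc q 2 else pc q 1, \<sigma>)"
    by (subst step_NegTest[OF pos instr reply]) simp
  then have reached: "reach prog b (if b ! q then pc q 2 else pc q 1, \<sigma>)"
    using reach_step assms(5) by blast
  show ?thesis
  proof (cases "b ! q")
    case True
    then obtain j where "j < 3" "lit_true \<sigma> (lit (Suc q) j)"
      using assms(4) by (auto simp: clause_ok_def)
    then show ?thesis
      using reach_literal_tests[OF assms(2,3), of j 0 b] reached True by simp
  next
    case False
    then show ?thesis using reach_jump[OF assms(2), of 1] reached by simp
  qed
qed

lemma reach_out:
  assumes "length b = n"
    and sat: "\<forall>i \<in> {1..D}. b ! (i - 1) \<longrightarrow> (\<exists>j<3. asg (fst (lit i j)) = snd (lit i j))"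
  shows "reach prog b (pc D 0, (\<lambda>v. Some (asg v)) |` {1..K})"
proof -
  let ?\<sigma> = "(\<lambda>v. Some (asg v)) |` {1..K}"
  have dom: "dom ?\<sigma> = {1..K}" by (auto simp: dom_def restrict_map_def split: if_splits)
  have ok: "clause_ok b ?\<sigma> i" if i: "i \<in> {1..D}" for i
    unfolding clause_ok_def
  proof
    assume "b ! (i - 1)"
    then obtain j where j: "j < 3" "asg (fst (lit i j)) = snd (lit i j)" using sat i by blast
    then have "lit_true ?\<sigma> (lit i j)" using lit_var[OF i j(1)] by (simp add: lit_true_def)
    then show "\<exists>j<3. lit_true ?\<sigma> (lit i j)" using j(1) by blast
  qed
  have "reach prog b (pc q 0, ?\<sigma>)" if "q \<le> D" for q
    using that
  proof (induction q)
    case 0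
    have "{1..<Suc K} = {1..K}" by auto
    then show ?case using reach_splitting[of "Suc K" b asg] by simp
  next
    case (Suc q)
    then show ?case using reach_through_block[OF assms(1) _ dom ok] by simp
  qed
  then show ?thesis by simp
qed

theorem prog_computes: "splitting_computes prog n clauses_satisfiable"
  unfolding splitting_computes_def
proof (intro allI impI conjI)
  fix b c
  assume "length b = n" "reach prog b c"
  then have "progresses b c" using reach_branch_inv branch_inv_progresses by blast
  then show "at_term prog (fst c) \<or> (\<exists>c'. step prog b c c')" unfolding progresses_def ..
next
  fix b :: "bool list"
  assume len: "length b = n"
  show "clauses_satisfiable b \<longleftrightarrow> (\<exists>c. reach prog b c \<and> at_out prog (fst c))"
  proof
    assume "clauses_satisfiable b"
    then obtain asg where "\<forall>i \<in> {1..D}. b ! (i - 1) \<longrightarrow> (\<exists>j<3. asg (fst (lit i j)) = snd (lit i j))"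
      unfolding clauses_satisfiable_def by blast
    moreover have "at_out prog (pc D 0)" using prog_out by (simp add: at_out_def length_prog)
    ultimately show "\<exists>c. reach prog b c \<and> at_out prog (fst c)"
      using reach_out[OF len] by auto
  next
    assume "\<exists>c. reach prog b c \<and> at_out prog (fst c)"
    then obtain p \<sigma> where "reach prog b (p, \<sigma>)" "at_out prog p" by auto
    then have ok: "\<forall>i \<in> {1..D}. clause_ok b \<sigma> i"
      using out_reached_clauses_ok reach_branch_inv[OF _ len] by blast
    have "\<exists>j<3. (\<sigma> (fst (lit i j)) = Some True) = snd (lit i j)"
      if i: "i \<in> {1..D}" and true_input: "b ! (i - 1)" for i
    proof -
      obtain j where "j < 3" "\<sigma> (fst (lit i j)) = Some (snd (lit i j))"
        using ok i true_input unfolding clause_ok_def lit_true_def by blast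
      then show ?thesis by auto
    qed
    then show "clauses_satisfiable b" unfolding clauses_satisfiable_def
      by (intro exI[of _ "\<lambda>v. \<sigma> v = Some True"]) blast
  qed
qed

(* All registers and parameters used have positive indices. *)
lemma prog_in_SIS_br: "prog \<in> SIS_br"
proof -
  have "instr_ok u" if "u \<in> set (block (Suc q))" "q < D" for u q
  proof -
    have "1 \<le> fst (lit (Suc q) j)" if "j < 3" for j
      using lit_var[of "Suc q" j] \<open>q < D\<close> that by simp
    then show ?thesis using that(1) by (auto simp: block_def lit_test_def)
  qed
  then show ?thesis by (auto simp: SIS_br_def prog_def clause_blocks_def)
qed

end

(* With K = kidx n and D = d K we have K <= D <= n, which bounds the program length. *)
lemma le_d: "k \<le> d k"
  unfolding d_def by simp

lemma d_kidx_le: "d (kidx n) \<le> n"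
  unfolding kidx_def
proof (rule GreatestI_nat[where b = n])
  show "d 0 \<le> n" by (simp add: d_def binomial_eq_0)
  show "y \<le> n" if "d y \<le> n" for y
    using that le_d le_trans by blast
qed

lemma threeSATC_program:
  assumes clauses: "\<forall>i \<in> {1..d (kidx n)}. \<alpha> (kidx n) i \<in> Lits (kidx n)"
  shows "\<exists>X \<in> SIS_br. splitting_computes X n (threeSATC \<alpha> n) \<and> length X \<le> 10 * n + 2"
proof -
  define K where "K = kidx n"
  define D where "D = d K"
  define lit :: "nat \<Rightarrow> nat \<Rightarrow> literal" where "lit i = (SOME f. f ` {..<3} = \<alpha> K i)" for i
  have clause: "\<alpha> K i \<in> Lits K" if "i \<in> {1..D}" for i
    using clauses that by (simp add: K_def D_def)
  have lits: "lit i ` {..<3} = \<alpha> K i" if "i \<in> {1..D}" for i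
  proof -
    have "finite (\<alpha> K i)" "\<alpha> K i \<noteq> {}" "card (\<alpha> K i) \<le> 3"
      using clause[OF that] unfolding Lits_def by (auto intro: card_ge_0_finite)
    then have "\<exists>f. f ` {..<3 :: nat} = \<alpha> K i" by (rule surj_from_bounded_range)
    then show ?thesis unfolding lit_def by (rule someI_ex)
  qed
  have "D \<le> n" using d_kidx_le by (simp add: D_def K_def)
  interpret clause_program K D n lit
  proof
    show "D \<le> n" by fact
    fix i j :: nat
    assume i: "i \<in> {1..D}" and "j < 3"
    then have "lit i j \<in> \<alpha> K i" using lits by blast
    then show "fst (lit i j) \<in> {1..K}" using clause[OF i] unfolding Lits_def by auto
  qed
  have clause_sat: "(\<exists>(v, s) \<in> \<alpha> K i. asg v = s) \<longleftrightarrow> (\<exists>j<3. asg (fst (lit i j)) = snd (lit i j))"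
    if "i \<in> {1..D}" for asg i
  proof -
    have "(\<exists>(v, s) \<in> \<alpha> K i. asg v = s) \<longleftrightarrow> (\<exists>l \<in> lit i ` {..<3}. asg (fst l) = snd l)"
      unfolding lits[OF that] by (simp add: case_prod_beta)
    then show ?thesis by auto
  qed
  have "threeSATC \<alpha> n = clauses_satisfiable"
    unfolding threeSATC_def clauses_satisfiable_def K_def[symmetric] D_def[symmetric]
    by (simp only: clause_sat cong: ball_cong)
  moreover have "length prog \<le> 10 * n + 2"
    using length_prog le_d[of K] \<open>D \<le> n\<close> by (simp add: D_def)
  ultimately show ?thesis using prog_computes prog_in_SIS_br by auto
qed

theorem theorem10:
  fixes \<alpha> :: "nat \<Rightarrow> nat \<Rightarrow> literal set"
  assumes "\<forall>k. bij_betw (\<alpha> k) {1..d k} (Lits k)"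
    and "\<forall>i. \<forall>j \<in> {1..d i}. \<alpha> (Suc i) j = \<alpha> i j"
  shows "threeSATC \<alpha> \<in> P_lsis"
  unfolding P_lsis_def
proof (intro CollectI exI[of _ "[:2, 10:]"] allI)
  fix n
  have "\<forall>i \<in> {1..d (kidx n)}. \<alpha> (kidx n) i \<in> Lits (kidx n)"
    using assms(1) bij_betwE by blast
  then obtain X where "X \<in> SIS_br" "splitting_computes X n (threeSATC \<alpha> n)" "length X \<le> 10 * n + 2"
    using threeSATC_program by blast
  moreover have "poly [:2, 10:] n = 10 * n + 2" by simp
  ultimately show "\<exists>X \<in> SIS_br. splitting_computes X n (threeSATC \<alpha> n) \<and> length X \<le> poly [:2, 10:] n"
    by auto
qed

end
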